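(* For every integer $\alpha$ and $m$, \[ \langle W_{m+3}\rangle^{{\rm SU}(3)_{-4}}(x;q)=\begin{cases}\dfrac{q^{m/4}}{1+q^{m/4}+q^{-m/4}}\langle W_m\rangle^{{\rm SU}(3)_{-4}}(x;q),& m=4\alpha,\\ (1+q^{\frac{m+3}{4}}+q^{\frac{2m+6}{4}})\langle W_m\rangle^{{\rm SU}(3)_{-4}}(x;q),& m=4\alpha+1,\\ -q^{\frac{3m+6}{4}}\langle W_m\rangle^{{\rm SU}(3)_{-4}}(x;q),& m=4\alpha+2,\\ -q^{\frac{3m+3}{4}}\langle W_m\rangle^{{\rm SU}(3)_{-4}}(x;q),& m=4\alpha+3.\end{cases} \]
   Context: Let $|q|<1$, $x$ a nonzero parameter, $(a;q)_\infty=\prod_{k\ge0}(1-aq^k)$. Let $s_1,s_2$ be variables and $s_3:=(s_1s_2)^{-1}$. For $m\in\mathbb{Z}$ define \[ \langle W_m\rangle^{{\rm SU}(3)_{-4}}(x;q):=\frac{(q;q)_\infty^{2}}{3!}\oint\frac{ds_1}{2\pi i s_1}\frac{ds_2}{2\pi i s_2}\prod_{\substack{i,j=1\\ i\ne j}}^3(s_is_j^{-1};q)_\infty\prod_{i=1}^3(q^{1/2}s_ix;q)_\infty(q^{1/2}s_i^{-1}x^{-1};q)_\infty\sum_{i=1}^3 s_i^m, \] where the integral denotes the constant term in $s_1,s_2$ of the integrand expanded as a formal Laurent series (equivalently the contour integral over unit circles). *)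

theory Defs
  imports "HOL-Complex_Analysis.Complex_Analysis"
begin

definition qpoch :: "complex \<Rightarrow> complex \<Rightarrow> complex" where
  "qpoch a q = (\<Prod>k. 1 - a * q ^ k)"

definition svar :: "complex \<Rightarrow> complex \<Rightarrow> nat \<Rightarrow> complex" where
  "svar s1 s2 i = (if i = 0 then s1 else if i = 1 then s2 else inverse (s1 * s2))"

text \<open>Integrand of the SU(3)_{-4} Wilson line index (without the measure ds/(2 pi i s)).
  q^(1/2) is taken to be csqrt q.\<close>
definition su3_integrand :: "int \<Rightarrow> complex \<Rightarrow> complex \<Rightarrow> complex \<Rightarrow> complex \<Rightarrow> complex" where
  "su3_integrand m x q s1 s2 =
     (let s = svar s1 s2 in
       (\<Prod>i<3. \<Prod>j\<in>{..<3} - {i}. qpoch (s i / s j) q) *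
       (\<Prod>i<3. qpoch (csqrt q * s i * x) q * qpoch (csqrt q * inverse (s i) * inverse x) q) *
       (\<Sum>i<3. s i powi m))"

definition W_SU3 :: "int \<Rightarrow> complex \<Rightarrow> complex \<Rightarrow> complex" where
  "W_SU3 m x q =
     (qpoch q q)\<^sup>2 / fact 3 *
     contour_integral (circlepath 0 1)
       (\<lambda>s1. contour_integral (circlepath 0 1)
          (\<lambda>s2. su3_integrand m x q s1 s2 / (2 * pi * \<i> * s2)) / (2 * pi * \<i> * s1))"

end

theory Submission
  imports Defs
begin

(* On the unit torus, with s3 = 1/(s1 s2), the integrand factors as
   K(s) * Delta(s) * (s1^m + s2^m + s3^m), where Delta is the Vandermonde determinant and the
   kernel K is a product of theta functions theta(z) = (z;q)(q/z;q). Since Delta times a power sum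
   is a sum of three alternants, W_m is (q;q)^2 times a sum of three moments M(a,b,c) of K
   against s1^a s2^b s3^c. The kernel is antisymmetric under permutations of s1, s2, s3 and
   quasi-periodic under s2 -> q s2; moving the s2-contour by Cauchy's theorem turns the latter
   into M(a,b,c) = q^(b-c-4) M(a,b-4,c+4). Hence M is alternating, depends on (a,b,c) only
   modulo (1,1,1), changes by explicit powers of q along the lattice 4 {i + j + k = 0}, and
   vanishes when two of a, b, c agree mod 4. For each residue of m mod 4 this expresses W_m and
   W_(m+3) through one and the same moment. *)

lemma qpoch_has_prod:
  fixes a q :: complex
  assumes "norm q < 1"
  shows "(\<lambda>k. 1 - a * q ^ k) has_prod qpoch a q"
proof -
  have "summable (\<lambda>k. norm (1 - a * q ^ k - 1))"
    using assms by (simp add: norm_mult norm_power summable_mult summable_geometric)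
  hence "convergent_prod (\<lambda>k. 1 - a * q ^ k)"
    by (intro abs_convergent_prod_imp_convergent_prod summable_imp_abs_convergent_prod)
  thus ?thesis
    unfolding qpoch_def by (simp add: convergent_prod_has_prod)
qed

lemma qpoch_rec:
  fixes a q :: complex
  assumes "norm q < 1"
  shows "qpoch a q = (1 - a) * qpoch (a * q) q"
proof -
  have "(\<lambda>k. 1 - a * q ^ Suc k) has_prod qpoch (a * q) q"
    using qpoch_has_prod[OF assms, of "a * q"] by (simp add: ac_simps)
  from has_prod_Suc_imp[OF this]
  have "(\<lambda>k. 1 - a * q ^ k) has_prod (qpoch (a * q) q * (1 - a))"
    by simp
  thus ?thesis
    using has_prod_unique2[OF qpoch_has_prod[OF assms]] by (simp add: mult.commute)
qed

lemma uniform_limit_qpoch: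
  fixes q :: complex
  assumes "norm q < 1"
  shows "uniform_limit (cball 0 R) (\<lambda>n a. \<Prod>k<n. 1 - a * q ^ k) (\<lambda>a. qpoch a q) sequentially"
proof -
  have "uniformly_convergent_on (cball 0 R) (\<lambda>n a. \<Prod>k<n. 1 - a * q ^ k)"
  proof (rule uniformly_convergent_on_prod')
    show "uniformly_convergent_on (cball 0 R) (\<lambda>N a. \<Sum>n<N. norm (1 - a * q ^ n - 1))"
    proof (rule Weierstrass_m_test')
      show "norm (norm (1 - a * q ^ n - 1)) \<le> R * norm q ^ n" if "a \<in> cball 0 R" for n a
        using that by (simp add: norm_mult norm_power mult_right_mono)
      show "summable (\<lambda>n. R * norm q ^ n)"
        using assms by (simp add: summable_mult summable_geometric)
    qed
  qed (auto intro!: continuous_intros)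
  then obtain g where g: "uniform_limit (cball 0 R) (\<lambda>n a. \<Prod>k<n. 1 - a * q ^ k) g sequentially"
    by (auto simp: uniformly_convergent_on_def)
  have limit_eq: "g a = qpoch a q" if "a \<in> cball 0 R" for a
    using tendsto_uniform_limitI[OF g that] has_prod_imp_tendsto'[OF qpoch_has_prod[OF assms]]
    by (rule LIMSEQ_unique)
  show ?thesis
    using g by (rule uniform_limit_cong[THEN iffD1, rotated 2]) (auto simp: limit_eq)
qed

lemma qpoch_holomorphic_UNIV:
  fixes q :: complex
  assumes "norm q < 1"
  shows "(\<lambda>a. qpoch a q) holomorphic_on UNIV"
proof (rule holomorphic_uniform_sequence[where f = "\<lambda>n a. \<Prod>k<n. 1 - a * q ^ k"])
  fix z :: complex
  have "uniform_limit (cball z 1) (\<lambda>n a. \<Prod>k<n. 1 - a * q ^ k) (\<lambda>a. qpoch a q) sequentially"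
    by (rule uniform_limit_on_subset[OF uniform_limit_qpoch[OF assms, of "norm z + 1"]])
       (simp add: cball_subset_cball_iff)
  thus "\<exists>d>0. cball z d \<subseteq> UNIV \<and>
          uniform_limit (cball z d) (\<lambda>n a. \<Prod>k<n. 1 - a * q ^ k) (\<lambda>a. qpoch a q) sequentially"
    by (intro exI[of _ 1]) auto
qed (auto intro!: holomorphic_intros)

lemma qpoch_holomorphic [holomorphic_intros]:
  assumes "norm q < 1" and "f holomorphic_on S"
  shows "(\<lambda>z. qpoch (f z) q) holomorphic_on S"
  using holomorphic_on_compose[OF assms(2) holomorphic_on_subset[OF qpoch_holomorphic_UNIV[OF assms(1)]]]
  by (simp add: o_def)

lemma qpoch_continuous_on [continuous_intros]:
  assumes "norm q < 1" and "continuous_on S f"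
  shows "continuous_on S (\<lambda>z. qpoch (f z) q)"
  using continuous_on_compose[OF assms(2)
      continuous_on_subset[OF holomorphic_on_imp_continuous_on[OF qpoch_holomorphic_UNIV[OF assms(1)]]]]
  by (simp add: o_def)

definition theta :: "complex \<Rightarrow> complex \<Rightarrow> complex" where
  "theta q z = qpoch z q * qpoch (q / z) q"

lemma theta_holomorphic [holomorphic_intros]:
  assumes "norm q < 1" and "f holomorphic_on S" and "\<And>z. z \<in> S \<Longrightarrow> f z \<noteq> 0"
  shows "(\<lambda>z. theta q (f z)) holomorphic_on S"
  unfolding theta_def using assms by (intro holomorphic_intros) auto

lemma theta_continuous_on [continuous_intros]:
  assumes "norm q < 1" and "continuous_on S f" and "\<And>z. z \<in> S \<Longrightarrow> f z \<noteq> 0"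
  shows "continuous_on S (\<lambda>z. theta q (f z))"
  unfolding theta_def using assms by (intro continuous_intros) auto

definition circle_mean :: "(complex \<Rightarrow> complex) \<Rightarrow> complex" where
  "circle_mean g = integral {0..1} (\<lambda>t. g (circlepath 0 1 t))"

definition torus_mean :: "(complex \<Rightarrow> complex \<Rightarrow> complex) \<Rightarrow> complex" where
  "torus_mean G = circle_mean (\<lambda>s1. circle_mean (G s1))"

definition torus_continuous :: "(complex \<Rightarrow> complex \<Rightarrow> complex) \<Rightarrow> bool" where
  "torus_continuous G \<longleftrightarrow> continuous_on (sphere 0 1 \<times> sphere 0 1) (\<lambda>(s1, s2). G s1 s2)"

lemma circlepath_in_sphere: "circlepath 0 1 t \<in> sphere 0 1"
  by (simp add: circlepath norm_mult)

lemma contour_integral_circlepath_eq_circle_mean: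
  "contour_integral (circlepath 0 1) (\<lambda>z. g z / (2 * pi * \<i> * z)) = circle_mean g"
  unfolding contour_integral_integral circle_mean_def
proof (rule integral_cong)
  fix t :: real
  have "circlepath 0 1 t \<noteq> 0"
    using circlepath_in_sphere[of t] by auto
  thus "g (circlepath 0 1 t) / (2 * pi * \<i> * circlepath 0 1 t) * vector_derivative (circlepath 0 1) (at t)
        = g (circlepath 0 1 t)"
    unfolding vector_derivative_circlepath by (simp add: circlepath)
qed

lemma circle_mean_cong:
  assumes "\<And>z. z \<in> sphere 0 1 \<Longrightarrow> g z = h z"
  shows "circle_mean g = circle_mean h"
  unfolding circle_mean_def using assms circlepath_in_sphere by (intro integral_cong) auto

lemma torus_mean_cong:
  assumes "\<And>s1 s2. s1 \<in> sphere 0 1 \<Longrightarrow> s2 \<in> sphere 0 1 \<Longrightarrow> G s1 s2 = H s1 s2"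
  shows "torus_mean G = torus_mean H"
  unfolding torus_mean_def using assms by (intro circle_mean_cong) auto

lemma circle_mean_mult_left: "circle_mean (\<lambda>z. c * g z) = c * circle_mean g"
  unfolding circle_mean_def by (rule integral_mult_right)

lemma torus_mean_mult_left: "torus_mean (\<lambda>s1 s2. c * G s1 s2) = c * torus_mean G"
  unfolding torus_mean_def circle_mean_mult_left ..

lemma torus_continuous_add:
  "torus_continuous F \<Longrightarrow> torus_continuous G \<Longrightarrow>
     torus_continuous (\<lambda>s1 s2. F s1 s2 + G s1 s2)"
  and torus_continuous_diff:
  "torus_continuous F \<Longrightarrow> torus_continuous G \<Longrightarrow>
     torus_continuous (\<lambda>s1 s2. F s1 s2 - G s1 s2)"
  unfolding torus_continuous_def case_prod_unfold by (intro continuous_intros; assumption)+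

lemma continuous_on_torus_parametrization:
  assumes "torus_continuous G"
  shows "continuous_on (cbox (0, 0) (1, 1)) (\<lambda>p. G (circlepath 0 1 (fst p)) (circlepath 0 1 (snd p)))"
proof -
  have "continuous_on UNIV (circlepath 0 1)"
    by (simp add: circlepath continuous_intros)
  hence "continuous_on (cbox (0, 0) (1::real, 1::real))
           (\<lambda>p. (circlepath 0 1 (fst p), circlepath 0 1 (snd p)))"
    by (auto intro!: continuous_intros continuous_on_compose2[of UNIV "circlepath 0 1"])
  moreover have "(\<lambda>p. (circlepath 0 1 (fst p), circlepath 0 1 (snd p))) ` cbox (0, 0) (1, 1)
                   \<subseteq> sphere 0 1 \<times> sphere 0 1"
    using circlepath_in_sphere by auto
  ultimately show ?thesis
    using continuous_on_compose2[OF assms[unfolded torus_continuous_def case_prod_unfold], of _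
        "\<lambda>p. (circlepath 0 1 (fst p), circlepath 0 1 (snd p))"]
    by simp
qed

lemma torus_mean_eq_integral:
  assumes "torus_continuous G"
  shows "torus_mean G = integral (cbox (0, 0) (1, 1)) (\<lambda>p. G (circlepath 0 1 (fst p)) (circlepath 0 1 (snd p)))"
  unfolding torus_mean_def circle_mean_def
  using integral_prod_continuous[OF continuous_on_torus_parametrization[OF assms]]
  by (simp add: cbox_interval)

lemma torus_mean_add:
  assumes "torus_continuous F" and "torus_continuous G"
  shows "torus_mean (\<lambda>s1 s2. F s1 s2 + G s1 s2) = torus_mean F + torus_mean G"
  unfolding torus_mean_eq_integral[OF assms(1)] torus_mean_eq_integral[OF assms(2)]
    torus_mean_eq_integral[OF torus_continuous_add[OF assms]]
  using assms by (subst integral_add[symmetric])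
    (auto intro!: integrable_continuous continuous_on_torus_parametrization)

lemma torus_mean_diff:
  assumes "torus_continuous F" and "torus_continuous G"
  shows "torus_mean (\<lambda>s1 s2. F s1 s2 - G s1 s2) = torus_mean F - torus_mean G"
  unfolding torus_mean_eq_integral[OF assms(1)] torus_mean_eq_integral[OF assms(2)]
    torus_mean_eq_integral[OF torus_continuous_diff[OF assms]]
  using assms by (subst integral_diff[symmetric])
    (auto intro!: integrable_continuous continuous_on_torus_parametrization)

lemma torus_mean_swap:
  assumes "torus_continuous G"
  shows "torus_mean (\<lambda>s1 s2. G s2 s1) = torus_mean G"
proof -
  have "continuous_on (cbox (0, 0) (1::real, 1::real)) (\<lambda>(s, t). G (circlepath 0 1 s) (circlepath 0 1 t))"
    using continuous_on_torus_parametrization[OF assms] by (simp add: case_prod_unfold)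
  from integral_swap_continuous[OF this] show ?thesis
    unfolding torus_mean_def circle_mean_def by (simp add: cbox_interval)
qed

lemma circle_mean_inverse: "circle_mean (\<lambda>z. g (inverse z)) = circle_mean g"
proof -
  have reflect: "inverse (circlepath 0 1 t) = circlepath 0 1 (1 + - t)" for t
  proof -
    have "circlepath 0 1 (1 + - t) = exp (2 * pi * \<i> + - (2 * pi * \<i> * t))"
      by (simp add: circlepath algebra_simps)
    also have "\<dots> = exp (2 * pi * \<i>) * exp (- (2 * pi * \<i> * t))"
      by (rule exp_add)
    finally show ?thesis
      by (simp add: circlepath exp_minus)
  qed
  have "circle_mean (\<lambda>z. g (inverse z))
          = integral {- 0..- (-1)} (\<lambda>t. (\<lambda>y. g (circlepath 0 1 (1 + y))) (- t))"
    unfolding circle_mean_def reflect by simp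
  also have "\<dots> = integral {-1..0} (\<lambda>y. g (circlepath 0 1 (1 + y)))"
    by (rule Henstock_Kurzweil_Integration.integral_reflect_real[of 0 "-1" "\<lambda>y. g (circlepath 0 1 (1 + y))"])
  also have "\<dots> = integral {-1..0} ((\<lambda>t. g (circlepath 0 1 t)) \<circ> (+) 1)"
    by (simp add: o_def)
  also have "\<dots> = circle_mean g"
    unfolding circle_mean_def integral_shift_Icc_real by simp
  finally show ?thesis .
qed

lemma contour_integral_scaled_circlepath:
  assumes "c \<noteq> 0"
  shows "contour_integral (\<lambda>t. c * circlepath 0 1 t) (\<lambda>z. g z / z)
           = 2 * pi * \<i> * circle_mean (\<lambda>z. g (c * z))"
proof -
  have "vector_derivative (\<lambda>t. c * circlepath 0 1 t) (at t)
          = c * (complex_of_real (2 * pi) * \<i> * complex_of_real 1 *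
                 exp (2 * complex_of_real pi * \<i> * complex_of_real t))" for t
    by (rule vector_derivative_at, rule has_vector_derivative_mult_right,
        rule has_vector_derivative_circlepath)
  hence "contour_integral (\<lambda>t. c * circlepath 0 1 t) (\<lambda>z. g z / z)
           = integral {0..1} (\<lambda>t. 2 * pi * \<i> * g (c * circlepath 0 1 t))"
    unfolding contour_integral_integral using assms by (intro integral_cong) (simp add: circlepath)
  thus ?thesis
    unfolding circle_mean_def by (simp add: integral_mult_right)
qed

lemma valid_path_scaled_circlepath: "valid_path (\<lambda>t. c * circlepath 0 1 t)"
  using valid_path_compose_holomorphic[of "circlepath 0 1" "\<lambda>z. c * z" UNIV]
  by (auto intro!: holomorphic_intros simp: o_def)

lemma homotopic_loops_scaled_circlepath:
  assumes "Im c \<noteq> 0 \<or> 0 < Re c"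
  shows "homotopic_loops (- {0}) (\<lambda>t. c * circlepath 0 1 t) (circlepath 0 1)"
proof -
  have nonzero: "(1 - u) * c + u \<noteq> 0" if "0 \<le> u" "u \<le> 1" for u :: real
  proof
    assume vanish: "(1 - u) * c + u = 0"
    have "(1 - u) * Im c = 0" and "(1 - u) * Re c + u = 0"
      using arg_cong[OF vanish, of Im] arg_cong[OF vanish, of Re] by simp_all
    show False
    proof (cases "u = 1")
      case False
      with that have "0 < 1 - u"
        by simp
      with \<open>(1 - u) * Im c = 0\<close> assms have "0 < (1 - u) * Re c"
        by auto
      with \<open>(1 - u) * Re c + u = 0\<close> that show False
        by linarith
    qed (use \<open>(1 - u) * Re c + u = 0\<close> in simp)
  qed
  hence "closed_segment (c * circlepath 0 1 t) (circlepath 0 1 t) \<subseteq> - {0}" for t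
  proof (clarsimp simp: closed_segment_def)
    fix u :: real
    assume "0 \<le> u" "u \<le> 1" and "(1 - u) *\<^sub>R (c * circlepath 0 1 t) + u *\<^sub>R circlepath 0 1 t = 0"
    moreover have "(1 - u) *\<^sub>R (c * circlepath 0 1 t) + u *\<^sub>R circlepath 0 1 t
                     = circlepath 0 1 t * ((1 - u) * c + u)"
      by (simp add: scaleR_conv_of_real algebra_simps)
    ultimately show False
      using nonzero circlepath_in_sphere[of t] by auto
  qed
  moreover have "pathfinish (\<lambda>t. c * circlepath 0 1 t) = pathstart (\<lambda>t. c * circlepath 0 1 t)"
    by (simp add: pathstart_def pathfinish_def circlepath)
  ultimately show ?thesis
    by (intro homotopic_loops_linear) (auto intro: valid_path_imp_path valid_path_scaled_circlepath)
qed

lemma circle_mean_scale: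
  assumes "g holomorphic_on - {0}" and "c \<noteq> 0"
  shows "circle_mean (\<lambda>z. g (c * z)) = circle_mean g"
proof -
  have off_negative_axis: "circle_mean (\<lambda>z. h (d * z)) = circle_mean h"
    if "h holomorphic_on - {0}" and "Im d \<noteq> 0 \<or> 0 < Re d" for h d
  proof -
    have "contour_integral (\<lambda>t. d * circlepath 0 1 t) (\<lambda>z. h z / z)
            = contour_integral (\<lambda>t. 1 * circlepath 0 1 t) (\<lambda>z. h z / z)"
      using that by (auto intro!: Cauchy_theorem_homotopic_loops homotopic_loops_scaled_circlepath
          holomorphic_intros holomorphic_on_subset[OF that(1)] valid_path_scaled_circlepath)
    moreover have "d \<noteq> 0"
      using that(2) by auto
    ultimately show ?thesis
      using contour_integral_scaled_circlepath[of d h] contour_integral_scaled_circlepath[of 1 h]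
      by simp
  qed
  show ?thesis
  proof (cases "Im c \<noteq> 0 \<or> 0 < Re c")
    case False
    have "(\<lambda>z. g (\<i> * z)) holomorphic_on - {0}"
      using holomorphic_on_compose_gen[of "\<lambda>z. \<i> * z" "- {0}" g "- {0}"] assms(1)
      by (auto intro!: holomorphic_intros simp: o_def image_iff)
    moreover have "Im (- \<i> * c) \<noteq> 0"
      using False assms(2) complex_eq_iff by auto
    ultimately have "circle_mean (\<lambda>z. g (\<i> * ((- \<i> * c) * z))) = circle_mean (\<lambda>z. g (\<i> * z))"
      using off_negative_axis[of "\<lambda>z. g (\<i> * z)"] by blast
    also have "\<dots> = circle_mean g"
      using off_negative_axis[OF assms(1)] by simp
    finally show ?thesis
      by (simp add: mult.assoc[symmetric])
  qed (use off_negative_axis[OF assms(1)] in blast)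
qed

lemma torus_mean_scale_right:
  assumes "\<And>s1. s1 \<in> sphere 0 1 \<Longrightarrow> G s1 holomorphic_on - {0}" and "c \<noteq> 0"
  shows "torus_mean (\<lambda>s1 s2. G s1 (c * s2)) = torus_mean G"
  unfolding torus_mean_def using assms by (intro circle_mean_cong circle_mean_scale) auto

lemma torus_mean_inverse_right:
  assumes "\<And>s1. s1 \<in> sphere 0 1 \<Longrightarrow> G s1 holomorphic_on - {0}"
  shows "torus_mean (\<lambda>s1 s2. G s1 (inverse (s1 * s2))) = torus_mean G"
  unfolding torus_mean_def
proof (rule circle_mean_cong)
  fix s1 :: complex
  assume s1: "s1 \<in> sphere 0 1"
  have "circle_mean (\<lambda>s2. G s1 (inverse (s1 * s2)))
          = circle_mean (\<lambda>s2. (\<lambda>w. G s1 (inverse s1 * w)) (inverse s2))"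
    by (simp add: mult.commute)
  also have "\<dots> = circle_mean (\<lambda>w. G s1 (inverse s1 * w))"
    by (rule circle_mean_inverse)
  also have "\<dots> = circle_mean (G s1)"
    using s1 assms by (intro circle_mean_scale) auto
  finally show "circle_mean (\<lambda>s2. G s1 (inverse (s1 * s2))) = circle_mean (G s1)" .
qed

definition torus_monomial :: "int \<Rightarrow> int \<Rightarrow> int \<Rightarrow> complex \<Rightarrow> complex \<Rightarrow> complex" where
  "torus_monomial a b c s1 s2 = s1 powi a * s2 powi b * inverse (s1 * s2) powi c"

definition alternant :: "int \<Rightarrow> int \<Rightarrow> int \<Rightarrow> complex \<Rightarrow> complex \<Rightarrow> complex" where
  "alternant a b c s1 s2 =
     torus_monomial a b c s1 s2 - torus_monomial b a c s1 s2 - torus_monomial a c b s1 s2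
     - torus_monomial c b a s1 s2 + torus_monomial b c a s1 s2 + torus_monomial c a b s1 s2"

context
  fixes s1 s2 :: complex
  assumes s1_nonzero: "s1 \<noteq> 0" and s2_nonzero: "s2 \<noteq> 0"
begin

lemma torus_monomial_eq: "torus_monomial a b c s1 s2 = s1 powi (a - c) * s2 powi (b - c)"
  unfolding torus_monomial_def using s1_nonzero s2_nonzero
  by (simp add: power_int_diff power_int_mult_distrib power_int_inverse field_simps)

lemma torus_monomial_diagonal: "torus_monomial (a + n) (b + n) (c + n) s1 s2 = torus_monomial a b c s1 s2"
  by (simp add: torus_monomial_eq)

lemma torus_monomial_mult_power:
  "torus_monomial a b c s1 s2 * s1 powi m = torus_monomial (a + m) b c s1 s2"
  "torus_monomial a b c s1 s2 * s2 powi m = torus_monomial a (b + m) c s1 s2"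
  "torus_monomial a b c s1 s2 * inverse (s1 * s2) powi m = torus_monomial a b (c + m) s1 s2"
  unfolding torus_monomial_def using s1_nonzero s2_nonzero
  by (simp_all add: power_int_add mult_ac)

lemma alternant_mult_power_sum:
  "alternant a b c s1 s2 * (s1 powi m + s2 powi m + inverse (s1 * s2) powi m)
     = alternant (a + m) b c s1 s2 + alternant a (b + m) c s1 s2 + alternant a b (c + m) s1 s2"
  unfolding alternant_def ring_distribs torus_monomial_mult_power by (simp add: algebra_simps)

lemma vandermonde_eq_alternant:
  "(s1 - s2) * (s1 - inverse (s1 * s2)) * (s2 - inverse (s1 * s2)) = alternant 2 1 0 s1 s2"
  unfolding alternant_def torus_monomial_def using s1_nonzero s2_nonzero
  by (simp add: field_simps power2_eq_square)

end

(* With s3 = inverse (s1 * s2), the first three factors are theta (s_i / s_j) for i < j and the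
   next three theta (q^(1/2) s_i x); the denominator turns prod_(i<j) (1 - s_j / s_i) into the
   Vandermonde determinant (s1 - s2) (s1 - s3) (s2 - s3). *)
definition su3_kernel :: "complex \<Rightarrow> complex \<Rightarrow> complex \<Rightarrow> complex \<Rightarrow> complex" where
  "su3_kernel q x s1 s2 =
     theta q (s1 / s2) * theta q (s1 * (s1 * s2)) * theta q (s2 * (s1 * s2)) *
     theta q (csqrt q * s1 * x) * theta q (csqrt q * s2 * x) * theta q (csqrt q * inverse (s1 * s2) * x)
     / (s1 ^ 2 * s2)"

definition su3_moment :: "complex \<Rightarrow> complex \<Rightarrow> int \<Rightarrow> int \<Rightarrow> int \<Rightarrow> complex" where
  "su3_moment q x a b c = torus_mean (\<lambda>s1 s2. su3_kernel q x s1 s2 * torus_monomial a b c s1 s2)"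

context
  fixes q :: complex
  assumes q_lt_1: "norm q < 1" and q_nonzero: "q \<noteq> 0"
begin

lemma qpoch_mult_qpoch_inverse:
  assumes "z \<noteq> 0"
  shows "qpoch z q * qpoch (inverse z) q = (1 - inverse z) * theta q z"
proof -
  have "inverse z * q = q / z"
    by (simp add: divide_inverse mult.commute)
  thus ?thesis
    unfolding theta_def qpoch_rec[OF q_lt_1, of "inverse z"] by (simp add: ac_simps)
qed

lemma theta_mult_q:
  assumes "z \<noteq> 0"
  shows "theta q (q * z) = - theta q z / z"
proof -
  have a: "qpoch z q = (1 - z) * qpoch (z * q) q"
    by (rule qpoch_rec[OF q_lt_1])
  have b: "qpoch (inverse z) q = (1 - inverse z) * qpoch (q / z) q"
    using qpoch_rec[OF q_lt_1, of "inverse z"] by (simp add: field_simps)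
  have c: "q / (q * z) = inverse z"
    using q_nonzero by (simp add: field_simps)
  show ?thesis
    unfolding theta_def c b a using assms by (simp add: field_simps mult.commute)
qed

lemma theta_inverse:
  assumes "z \<noteq> 0"
  shows "theta q (inverse z) = - theta q z / z"
proof -
  have a: "qpoch z q = (1 - z) * qpoch (z * q) q"
    by (rule qpoch_rec[OF q_lt_1])
  have b: "qpoch (inverse z) q = (1 - inverse z) * qpoch (q / z) q"
    using qpoch_rec[OF q_lt_1, of "inverse z"] by (simp add: field_simps)
  have c: "q / inverse z = z * q"
    by (simp add: field_simps)
  show ?thesis
    unfolding theta_def c b a using assms by (simp add: field_simps mult.commute)
qed

lemma theta_div_q:
  assumes "z \<noteq> 0"
  shows "theta q (z / q) = - (z / q) * theta q z"
  using theta_mult_q[of "z / q"] assms q_nonzero by (simp add: field_simps)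

lemma theta_mult_q_q:
  assumes "z \<noteq> 0"
  shows "theta q (q * (q * z)) = theta q z / (q * z ^ 2)"
  using theta_mult_q[of "q * z"] theta_mult_q[of z] assms q_nonzero
  by (simp add: field_simps power2_eq_square)

lemma one_plus_powi_plus_powi_neg_nonzero: "1 + q powi n + q powi (- n) \<noteq> 0"
proof
  assume vanish: "1 + q powi n + q powi (- n) = 0"
  define w where "w = q powi n"
  have "w \<noteq> 0"
    using q_nonzero by (simp add: w_def)
  have "w ^ 3 - 1 = (w - 1) * w * (1 + w + inverse w)"
    using \<open>w \<noteq> 0\<close> by (simp add: algebra_simps power3_eq_cube)
  also have "1 + w + inverse w = 0"
    using vanish by (simp add: w_def power_int_minus)
  finally have "w ^ 3 = 1"
    by simp
  hence "norm q powi n = norm q powi 0"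
    using power_eq_1_iff[of w 3] by (simp add: w_def norm_power_int)
  moreover have "0 < norm q"
    using q_nonzero by simp
  ultimately show False
    using vanish q_lt_1 power_int_strict_decreasing[of n 0 "norm q"]
      power_int_strict_decreasing[of 0 n "norm q"]
    by (cases n "0::int" rule: linorder_cases) auto
qed

context
  fixes x :: complex
  assumes x_nonzero: "x \<noteq> 0"
begin

lemma su3_integrand_eq_kernel_alternants:
  assumes "s1 \<noteq> 0" and "s2 \<noteq> 0"
  shows "su3_integrand m x q s1 s2 = su3_kernel q x s1 s2 *
           (alternant (m + 2) 1 0 s1 s2 + alternant 2 (m + 1) 0 s1 s2 + alternant 2 1 m s1 s2)"
proof -
  define s3 where "s3 = inverse (s1 * s2)"
  have s3_nonzero: "s3 \<noteq> 0"
    using assms by (simp add: s3_def)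
  have roots: "qpoch (s1 / s2) q * qpoch (s2 / s1) q = (1 - s2 / s1) * theta q (s1 / s2)"
    "qpoch (s1 / s3) q * qpoch (s3 / s1) q = (1 - s3 / s1) * theta q (s1 * (s1 * s2))"
    "qpoch (s2 / s3) q * qpoch (s3 / s2) q = (1 - s3 / s2) * theta q (s2 * (s1 * s2))"
    using qpoch_mult_qpoch_inverse[of "s1 / s2"]
      qpoch_mult_qpoch_inverse[of "s1 * (s1 * s2)"]
      qpoch_mult_qpoch_inverse[of "s2 * (s1 * s2)"] assms
    by (simp_all add: s3_def field_simps)
  have flavour: "qpoch (csqrt q * s * x) q * qpoch (csqrt q * inverse s * inverse x) q = theta q (csqrt q * s * x)"
    if "s \<noteq> 0" for s
  proof -
    have "q / (csqrt q * s * x) = csqrt q * inverse s * inverse x"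
      using that x_nonzero q_nonzero power2_csqrt[of q] by (simp add: field_simps power2_eq_square)
    thus ?thesis
      unfolding theta_def by simp
  qed
  have "su3_integrand m x q s1 s2 =
          (qpoch (s1 / s2) q * qpoch (s2 / s1) q) * (qpoch (s1 / s3) q * qpoch (s3 / s1) q) *
          (qpoch (s2 / s3) q * qpoch (s3 / s2) q) *
          ((qpoch (csqrt q * s1 * x) q * qpoch (csqrt q * inverse s1 * inverse x) q) *
           (qpoch (csqrt q * s2 * x) q * qpoch (csqrt q * inverse s2 * inverse x) q) *
           (qpoch (csqrt q * s3 * x) q * qpoch (csqrt q * inverse s3 * inverse x) q)) *
          (s1 powi m + s2 powi m + s3 powi m)"
  proof -
    have "{..<3::nat} = {0, 1, 2}"
      by auto
    thus ?thesis
      unfolding su3_integrand_def Let_def svar_def s3_def by (simp add: insert_Diff_if ac_simps)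
  qed
  also have "\<dots> = su3_kernel q x s1 s2 * ((s1 - s2) * (s1 - s3) * (s2 - s3) * (s1 powi m + s2 powi m + s3 powi m))"
    unfolding roots flavour[OF assms(1)] flavour[OF assms(2)] flavour[OF s3_nonzero] su3_kernel_def
    using assms by (simp add: s3_def field_simps power2_eq_square)
  finally show ?thesis
    unfolding s3_def vandermonde_eq_alternant[OF assms] alternant_mult_power_sum[OF assms]
    by (simp add: add.commute)
qed

lemma su3_kernel_swap:
  assumes "s1 \<noteq> 0" and "s2 \<noteq> 0"
  shows "su3_kernel q x s2 s1 = - su3_kernel q x s1 s2"
proof -
  have swapped: "theta q (s2 / s1) = - theta q (s1 / s2) / (s1 / s2)"
    using theta_inverse[of "s1 / s2"] assms by (simp add: field_simps)
  show ?thesis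
    unfolding su3_kernel_def swapped using assms by (simp add: field_simps power2_eq_square)
qed

lemma su3_kernel_swap_right:
  assumes "s1 \<noteq> 0" and "s2 \<noteq> 0"
  shows "su3_kernel q x s1 (inverse (s1 * s2)) = - su3_kernel q x s1 s2"
proof -
  have e1: "s1 / inverse (s1 * s2) = s1 * (s1 * s2)"
    by (simp add: field_simps)
  have e2: "s1 * (s1 * inverse (s1 * s2)) = s1 / s2"
    using assms by (simp add: field_simps)
  have e3: "inverse (s1 * s2) * (s1 * inverse (s1 * s2)) = inverse (s2 * (s1 * s2))"
    using assms by (simp add: field_simps power2_eq_square)
  have e4: "inverse (s1 * inverse (s1 * s2)) = s2"
    using assms by (simp add: field_simps)
  have e5: "theta q (inverse (s2 * (s1 * s2))) = - theta q (s2 * (s1 * s2)) / (s2 * (s1 * s2))"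
    using theta_inverse[of "s2 * (s1 * s2)"] assms by simp
  show ?thesis
    unfolding su3_kernel_def e1 e2 e3 e4 e5 using assms by (simp add: field_simps power2_eq_square)
qed

lemma su3_kernel_mult_q_right:
  assumes "s1 \<noteq> 0" and "s2 \<noteq> 0"
  shows "su3_kernel q x s1 (q * s2) = su3_kernel q x s1 s2 / (q ^ 4 * s2 ^ 8 * s1 ^ 4)"
proof -
  define h where "h = csqrt q"
  have h_nonzero: "h \<noteq> 0"
    using q_nonzero by (simp add: h_def)
  have e1: "s1 / (q * s2) = (s1 / s2) / q"
    by simp
  have e2: "s1 * (s1 * (q * s2)) = q * (s1 * (s1 * s2))"
    by (simp add: algebra_simps)
  have e3: "q * s2 * (s1 * (q * s2)) = q * (q * (s2 * (s1 * s2)))"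
    by (simp add: algebra_simps)
  have e4: "h * (q * s2) * x = q * (h * s2 * x)"
    by (simp add: algebra_simps)
  have e5: "h * inverse (s1 * (q * s2)) * x = (h * inverse (s1 * s2) * x) / q"
    by (simp add: field_simps)
  have nz: "s1 / s2 \<noteq> 0" "s1 * (s1 * s2) \<noteq> 0" "s2 * (s1 * s2) \<noteq> 0" "h * s2 * x \<noteq> 0"
    "h * inverse (s1 * s2) * x \<noteq> 0"
    using assms h_nonzero x_nonzero by auto
  show ?thesis
    unfolding su3_kernel_def h_def[symmetric] e1 e2 e3 e4 e5
      theta_div_q[OF nz(1)] theta_mult_q[OF nz(2)]
      theta_mult_q_q[OF nz(3)] theta_mult_q[OF nz(4)]
      theta_div_q[OF nz(5)]
    using assms h_nonzero x_nonzero q_nonzero by (simp add: field_simps power2_eq_square eval_nat_numeral)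
qed

lemma torus_continuous_kernel_monomial:
  "torus_continuous (\<lambda>s1 s2. su3_kernel q x s1 s2 * torus_monomial a b c s1 s2)"
  unfolding torus_continuous_def case_prod_unfold su3_kernel_def torus_monomial_def
  using q_lt_1 q_nonzero x_nonzero by (intro continuous_intros) auto

lemma holomorphic_kernel_monomial:
  assumes "s1 \<noteq> 0"
  shows "(\<lambda>s2. su3_kernel q x s1 s2 * torus_monomial a b c s1 s2) holomorphic_on - {0}"
  unfolding su3_kernel_def torus_monomial_def
  using assms q_lt_1 q_nonzero x_nonzero by (intro holomorphic_intros) auto

lemma su3_moment_diagonal: "su3_moment q x (a + n) (b + n) (c + n) = su3_moment q x a b c"
  unfolding su3_moment_def
proof (rule torus_mean_cong)
  fix s1 s2 :: complex
  assume "s1 \<in> sphere 0 1" "s2 \<in> sphere 0 1"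
  hence "s1 \<noteq> 0" "s2 \<noteq> 0"
    by auto
  thus "su3_kernel q x s1 s2 * torus_monomial (a + n) (b + n) (c + n) s1 s2
          = su3_kernel q x s1 s2 * torus_monomial a b c s1 s2"
    by (simp add: torus_monomial_diagonal)
qed

lemma su3_moment_swap: "su3_moment q x a b c = - su3_moment q x b a c"
proof -
  have "su3_moment q x a b c = torus_mean (\<lambda>s1 s2. su3_kernel q x s2 s1 * torus_monomial a b c s2 s1)"
    unfolding su3_moment_def
    by (rule torus_mean_swap[symmetric, OF torus_continuous_kernel_monomial])
  also have "\<dots> = torus_mean (\<lambda>s1 s2. - 1 * (su3_kernel q x s1 s2 * torus_monomial b a c s1 s2))"
  proof (rule torus_mean_cong)
    fix s1 s2 :: complex
    assume "s1 \<in> sphere 0 1" "s2 \<in> sphere 0 1"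
    hence nz: "s1 \<noteq> 0" "s2 \<noteq> 0"
      by auto
    show "su3_kernel q x s2 s1 * torus_monomial a b c s2 s1
            = - 1 * (su3_kernel q x s1 s2 * torus_monomial b a c s1 s2)"
      unfolding su3_kernel_swap[OF nz] torus_monomial_eq[OF nz]
        torus_monomial_eq[OF nz(2,1)] by simp
  qed
  finally show ?thesis
    unfolding su3_moment_def torus_mean_mult_left by simp
qed

lemma su3_moment_swap_right: "su3_moment q x a b c = - su3_moment q x a c b"
proof -
  have "su3_moment q x a b c = torus_mean (\<lambda>s1 s2. su3_kernel q x s1 (inverse (s1 * s2)) *
                                              torus_monomial a b c s1 (inverse (s1 * s2)))"
    unfolding su3_moment_def
    by (rule torus_mean_inverse_right[symmetric])
       (auto intro: holomorphic_kernel_monomial)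
  also have "\<dots> = torus_mean (\<lambda>s1 s2. - 1 * (su3_kernel q x s1 s2 * torus_monomial a c b s1 s2))"
  proof (rule torus_mean_cong)
    fix s1 s2 :: complex
    assume "s1 \<in> sphere 0 1" "s2 \<in> sphere 0 1"
    hence nz: "s1 \<noteq> 0" "s2 \<noteq> 0"
      by auto
    have "inverse (s1 * inverse (s1 * s2)) = s2"
      using nz by (simp add: field_simps)
    hence "torus_monomial a b c s1 (inverse (s1 * s2)) = torus_monomial a c b s1 s2"
      unfolding torus_monomial_def by (simp only: ac_simps)
    thus "su3_kernel q x s1 (inverse (s1 * s2)) * torus_monomial a b c s1 (inverse (s1 * s2))
            = - 1 * (su3_kernel q x s1 s2 * torus_monomial a c b s1 s2)"
      unfolding su3_kernel_swap_right[OF nz] by simp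
  qed
  finally show ?thesis
    unfolding su3_moment_def torus_mean_mult_left by simp
qed

lemma su3_moment_shift:
  "su3_moment q x a b c = q powi (b - c - 4) * su3_moment q x a (b - 4) (c + 4)"
proof -
  have "su3_moment q x a b c = torus_mean (\<lambda>s1 s2. su3_kernel q x s1 (q * s2) *
                                              torus_monomial a b c s1 (q * s2))"
    unfolding su3_moment_def
    by (rule torus_mean_scale_right[symmetric])
       (auto intro: holomorphic_kernel_monomial simp: q_nonzero)
  also have "\<dots> = torus_mean (\<lambda>s1 s2. q powi (b - c - 4) *
                      (su3_kernel q x s1 s2 * torus_monomial a (b - 4) (c + 4) s1 s2))"
  proof (rule torus_mean_cong)
    fix s1 s2 :: complex
    assume "s1 \<in> sphere 0 1" "s2 \<in> sphere 0 1"
    hence nz: "s1 \<noteq> 0" "s2 \<noteq> 0" "q * s2 \<noteq> 0"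
      using q_nonzero by auto
    have "q powi (b - c - 4) = q powi (b - c) / q ^ 4"
      "s1 powi (a - (c + 4)) = s1 powi (a - c) / s1 ^ 4"
      "s2 powi (b - 4 - (c + 4)) = s2 powi (b - c) / s2 ^ 8"
      using nz q_nonzero by (simp_all add: power_int_diff flip: diff_diff_eq)
    thus "su3_kernel q x s1 (q * s2) * torus_monomial a b c s1 (q * s2) =
            q powi (b - c - 4) * (su3_kernel q x s1 s2 * torus_monomial a (b - 4) (c + 4) s1 s2)"
      unfolding su3_kernel_mult_q_right[OF nz(1,2)]
        torus_monomial_eq[OF nz(1,3)] torus_monomial_eq[OF nz(1,2)]
      using nz q_nonzero by (simp add: power_int_mult_distrib field_simps)
  qed
  finally show ?thesis
    unfolding su3_moment_def torus_mean_mult_left .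
qed

lemma su3_moment_rotate: "su3_moment q x a b c = su3_moment q x b c a"
  using su3_moment_swap[of a b c] su3_moment_swap_right[of b a c] by simp

lemma su3_moment_swap_outer: "su3_moment q x a b c = - su3_moment q x c b a"
  using su3_moment_rotate[of a b c] su3_moment_swap[of b c a] by simp

lemma su3_moment_shift_iter:
  "su3_moment q x a b c = q powi (k * (b - c) - 4 * k\<^sup>2) * su3_moment q x a (b - 4 * k) (c + 4 * k)"
proof (induction k rule: int_induct[where k = 0])
  case base
  show ?case by simp
next
  case (step1 k)
  have "su3_moment q x a (b - 4 * k) (c + 4 * k)
          = q powi (b - c - 8 * k - 4) * su3_moment q x a (b - 4 * (k + 1)) (c + 4 * (k + 1))"
    using su3_moment_shift[of a "b - 4 * k" "c + 4 * k"] by (simp add: algebra_simps)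
  with step1.IH show ?case
    using q_nonzero by (simp add: power_int_add[symmetric] algebra_simps power2_eq_square)
next
  case (step2 k)
  define d where "d = b - c - 8 * k + 4"
  have "su3_moment q x a (b - 4 * (k - 1)) (c + 4 * (k - 1))
          = q powi d * su3_moment q x a (b - 4 * k) (c + 4 * k)"
    using su3_moment_shift[of a "b - 4 * (k - 1)" "c + 4 * (k - 1)"] by (simp add: d_def algebra_simps)
  moreover have "q powi (- d) * q powi d = 1"
    using q_nonzero by (simp add: power_int_add[symmetric])
  ultimately have "su3_moment q x a (b - 4 * k) (c + 4 * k)
          = q powi (- d) * su3_moment q x a (b - 4 * (k - 1)) (c + 4 * (k - 1))"
    by (metis mult.assoc mult_1)
  with step2.IH show ?case
    using q_nonzero by (simp add: d_def power_int_add[symmetric] algebra_simps power2_eq_square)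
qed

(* The exponent is (Q (a, b, c) - Q (a', b', c')) / 24 for the quadratic form
   Q (a, b, c) = (a - b)^2 + (b - c)^2 + (c - a)^2, which is invariant under (1, 1, 1). *)
lemma su3_moment_lattice:
  assumes "i + j + k = 0"
  shows "su3_moment q x a b c = q powi (- (a * i + b * j + c * k) - 2 * (i\<^sup>2 + j\<^sup>2 + k\<^sup>2)) *
           su3_moment q x (a + 4 * i + n) (b + 4 * j + n) (c + 4 * k + n)"
proof -
  have k: "k = - i - j"
    using assms by simp
  have "su3_moment q x a b c = - su3_moment q x b a c"
    by (rule su3_moment_swap)
  also have "su3_moment q x b a c
               = q powi (- i * (a - c) - 4 * i\<^sup>2) * su3_moment q x b (a + 4 * i) (c - 4 * i)"
    using su3_moment_shift_iter[of b a c "- i"] by simp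
  also have "su3_moment q x b (a + 4 * i) (c - 4 * i) = - su3_moment q x (a + 4 * i) b (c - 4 * i)"
    by (rule su3_moment_swap)
  also have "su3_moment q x (a + 4 * i) b (c - 4 * i)
               = q powi (- j * (b - c + 4 * i) - 4 * j\<^sup>2) * su3_moment q x (a + 4 * i) (b + 4 * j) (c + 4 * k)"
    using su3_moment_shift_iter[of "a + 4 * i" b "c - 4 * i" "- j"] by (simp add: k algebra_simps)
  also have "su3_moment q x (a + 4 * i) (b + 4 * j) (c + 4 * k)
               = su3_moment q x (a + 4 * i + n) (b + 4 * j + n) (c + 4 * k + n)"
    by (rule su3_moment_diagonal[symmetric])
  finally show ?thesis
    using q_nonzero by (simp add: k power_int_add[symmetric] algebra_simps power2_eq_square)
qed

lemma su3_moment_eq_0: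
  assumes "a mod 4 = b mod 4 \<or> b mod 4 = c mod 4 \<or> a mod 4 = c mod 4"
  shows "su3_moment q x a b c = 0"
proof -
  have first_pair: "su3_moment q x a' b' c' = 0" if "a' mod 4 = b' mod 4" for a' b' c'
  proof -
    have "4 dvd a' - b'"
      using that by (simp add: mod_eq_dvd_iff)
    then obtain i where i: "a' = b' + 4 * i"
      by (auto simp: dvd_def algebra_simps)
    have "su3_moment q x a' b' c' = su3_moment q x b' a' c'"
      using su3_moment_lattice[of "- i" i 0 a' b' c' 0] by (simp add: i algebra_simps power2_eq_square)
    thus ?thesis
      using su3_moment_swap[of a' b' c'] by simp
  qed
  show ?thesis
    using assms first_pair[of a b c] first_pair[of b c a] first_pair[of c a b]
      su3_moment_rotate[of a b c] su3_moment_rotate[of b c a] by auto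
qed

lemma torus_continuous_kernel_alternant:
  "torus_continuous (\<lambda>s1 s2. su3_kernel q x s1 s2 * alternant a b c s1 s2)"
  unfolding alternant_def right_diff_distrib distrib_left
  by (simp add: torus_continuous_add torus_continuous_diff torus_continuous_kernel_monomial)

lemma torus_mean_kernel_alternant:
  "torus_mean (\<lambda>s1 s2. su3_kernel q x s1 s2 * alternant a b c s1 s2) = 6 * su3_moment q x a b c"
proof -
  have "torus_mean (\<lambda>s1 s2. su3_kernel q x s1 s2 * alternant a b c s1 s2)
          = su3_moment q x a b c - su3_moment q x b a c - su3_moment q x a c b
            - su3_moment q x c b a + su3_moment q x b c a + su3_moment q x c a b"
    unfolding alternant_def right_diff_distrib distrib_left su3_moment_def
    by (simp add: torus_mean_add torus_mean_diff torus_continuous_add torus_continuous_diff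
        torus_continuous_kernel_monomial)
  also have "\<dots> = 6 * su3_moment q x a b c"
    using su3_moment_swap[of a b c] su3_moment_swap_right[of a b c] su3_moment_swap_outer[of a b c]
      su3_moment_rotate[of a b c] su3_moment_rotate[of c a b] by simp
  finally show ?thesis .
qed

lemma W_SU3_eq_moments:
  "W_SU3 m x q = (qpoch q q)\<^sup>2 *
     (su3_moment q x (m + 2) 1 0 + su3_moment q x 2 (m + 1) 0 + su3_moment q x 2 1 m)"
proof -
  have "W_SU3 m x q = (qpoch q q)\<^sup>2 / 6 * torus_mean (su3_integrand m x q)"
    unfolding W_SU3_def torus_mean_def contour_integral_circlepath_eq_circle_mean
    by (simp add: eval_nat_numeral)
  also have "torus_mean (su3_integrand m x q)
               = torus_mean (\<lambda>s1 s2. su3_kernel q x s1 s2 * alternant (m + 2) 1 0 s1 s2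
                                     + su3_kernel q x s1 s2 * alternant 2 (m + 1) 0 s1 s2
                                     + su3_kernel q x s1 s2 * alternant 2 1 m s1 s2)"
  proof (rule torus_mean_cong)
    fix s1 s2 :: complex
    assume "s1 \<in> sphere 0 1" "s2 \<in> sphere 0 1"
    hence "s1 \<noteq> 0" "s2 \<noteq> 0"
      by auto
    thus "su3_integrand m x q s1 s2 = su3_kernel q x s1 s2 * alternant (m + 2) 1 0 s1 s2
            + su3_kernel q x s1 s2 * alternant 2 (m + 1) 0 s1 s2
            + su3_kernel q x s1 s2 * alternant 2 1 m s1 s2"
      using su3_integrand_eq_kernel_alternants by (simp add: distrib_left)
  qed
  also have "\<dots> = 6 * (su3_moment q x (m + 2) 1 0 + su3_moment q x 2 (m + 1) 0 + su3_moment q x 2 1 m)"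
    by (simp add: torus_mean_add torus_continuous_add torus_continuous_kernel_alternant
        torus_mean_kernel_alternant distrib_left)
  finally show ?thesis
    by (simp add: algebra_simps)
qed

lemma W_SU3_4a:
  "W_SU3 (4 * \<alpha>) x q
     = (1 + q powi (- \<alpha>) + q powi (- 2 * \<alpha>)) * ((qpoch q q)\<^sup>2 * su3_moment q x (4 * \<alpha> + 2) 1 0)"
proof -
  have "su3_moment q x 2 (4 * \<alpha> + 1) 0 = q powi (- \<alpha>) * su3_moment q x (4 * \<alpha> + 2) 1 0"
    using su3_moment_lattice[of \<alpha> "- \<alpha>" 0 2 "4 * \<alpha> + 1" 0 0]
    by (simp add: algebra_simps power2_eq_square)
  moreover have "su3_moment q x 2 1 (4 * \<alpha>) = q powi (- 2 * \<alpha>) * su3_moment q x (4 * \<alpha> + 2) 1 0"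
    using su3_moment_lattice[of \<alpha> 0 "- \<alpha>" 2 1 "4 * \<alpha>" 0]
    by (simp add: algebra_simps power2_eq_square)
  ultimately show ?thesis
    unfolding W_SU3_eq_moments by (simp add: algebra_simps)
qed

lemma W_SU3_4a_1: "W_SU3 (4 * \<alpha> + 1) x q = (qpoch q q)\<^sup>2 * su3_moment q x (4 * \<alpha> + 3) 1 0"
  using su3_moment_eq_0[of 2 "4 * \<alpha> + 2" 0] su3_moment_eq_0[of 2 1 "4 * \<alpha> + 1"]
  unfolding W_SU3_eq_moments by (simp add: algebra_simps)

lemma W_SU3_4a_2: "W_SU3 (4 * \<alpha> + 2) x q = (qpoch q q)\<^sup>2 * su3_moment q x 2 (4 * \<alpha> + 3) 0"
  using su3_moment_eq_0[of "4 * \<alpha> + 4" 1 0] su3_moment_eq_0[of 2 1 "4 * \<alpha> + 2"]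
  unfolding W_SU3_eq_moments by (simp add: algebra_simps)

lemma W_SU3_4a_3: "W_SU3 (4 * \<alpha> + 3) x q = (qpoch q q)\<^sup>2 * su3_moment q x 2 1 (4 * \<alpha> + 3)"
  using su3_moment_eq_0[of "4 * \<alpha> + 5" 1 0] su3_moment_eq_0[of 2 "4 * \<alpha> + 4" 0]
  unfolding W_SU3_eq_moments by (simp add: algebra_simps)

lemma su3_moment_rotate_succ: "su3_moment q x (b + 1) (c + 1) (a + 1) = su3_moment q x a b c"
  using su3_moment_rotate[of a b c]
    su3_moment_diagonal[where a = b and b = c and c = a and n = 1]
  by simp

lemma W_SU3_4a_plus_3:
  "W_SU3 (4 * \<alpha> + 3) x q = q powi \<alpha> / (1 + q powi \<alpha> + q powi (- \<alpha>)) * W_SU3 (4 * \<alpha>) x q"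
proof -
  define c where "c = 1 + q powi (- \<alpha>) + q powi (- 2 * \<alpha>)"
  define d where "d = 1 + q powi \<alpha> + q powi (- \<alpha>)"
  have "q powi \<alpha> * q powi (- \<alpha>) = 1" and "q powi \<alpha> * q powi (- 2 * \<alpha>) = q powi (- \<alpha>)"
    using q_nonzero power_int_add[of q \<alpha> "- \<alpha>"] power_int_add[of q \<alpha> "- 2 * \<alpha>"] by simp_all
  hence "q powi \<alpha> * c = d"
    unfolding c_def d_def by (simp add: distrib_left)
  moreover have "d \<noteq> 0"
    unfolding d_def by (rule one_plus_powi_plus_powi_neg_nonzero)
  ultimately have "q powi \<alpha> / d * c = 1"
    by simp
  moreover have "su3_moment q x 2 1 (4 * \<alpha> + 3) = su3_moment q x (4 * \<alpha> + 2) 1 0"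
    using su3_moment_rotate_succ[of 1 0 "4 * \<alpha> + 2"] by (simp add: add.assoc)
  ultimately show ?thesis
    unfolding W_SU3_4a W_SU3_4a_3 c_def[symmetric] d_def[symmetric] by (metis mult.assoc mult_1)
qed

lemma W_SU3_4a_1_plus_3:
  "W_SU3 (4 * \<alpha> + 4) x q = (1 + q powi (\<alpha> + 1) + q powi (2 * \<alpha> + 2)) * W_SU3 (4 * \<alpha> + 1) x q"
proof -
  have "W_SU3 (4 * \<alpha> + 4) x q
          = (1 + q powi (- (\<alpha> + 1)) + q powi (- 2 * (\<alpha> + 1))) *
            ((qpoch q q)\<^sup>2 * su3_moment q x (4 * \<alpha> + 6) 1 0)"
    using W_SU3_4a[of "\<alpha> + 1"] by (simp add: algebra_simps)
  also have "su3_moment q x (4 * \<alpha> + 6) 1 0 = q powi (2 * \<alpha> + 2) * su3_moment q x 2 1 (4 * \<alpha> + 4)"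
    using su3_moment_lattice[of "- (\<alpha> + 1)" 0 "\<alpha> + 1" "4 * \<alpha> + 6" 1 0 0]
    by (simp add: algebra_simps power2_eq_square)
  also have "su3_moment q x 2 1 (4 * \<alpha> + 4) = su3_moment q x (4 * \<alpha> + 3) 1 0"
    using su3_moment_rotate_succ[of 1 0 "4 * \<alpha> + 3"] by (simp add: add.assoc)
  finally have "W_SU3 (4 * \<alpha> + 4) x q =
      (1 + q powi (- (\<alpha> + 1)) + q powi (- 2 * (\<alpha> + 1))) * q powi (2 * \<alpha> + 2) *
      W_SU3 (4 * \<alpha> + 1) x q"
    unfolding W_SU3_4a_1 by (simp add: ac_simps)
  also have "(1 + q powi (- (\<alpha> + 1)) + q powi (- 2 * (\<alpha> + 1))) * q powi (2 * \<alpha> + 2)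
               = 1 + q powi (\<alpha> + 1) + q powi (2 * \<alpha> + 2)"
    using q_nonzero power_int_add[of q "- (\<alpha> + 1)" "2 * \<alpha> + 2"]
      power_int_add[of q "- 2 * (\<alpha> + 1)" "2 * \<alpha> + 2"]
    by (simp add: algebra_simps)
  finally show ?thesis .
qed

lemma W_SU3_4a_2_plus_3:
  "W_SU3 (4 * \<alpha> + 5) x q = - (q powi (3 * \<alpha> + 3)) * W_SU3 (4 * \<alpha> + 2) x q"
proof -
  have "W_SU3 (4 * \<alpha> + 5) x q = (qpoch q q)\<^sup>2 * su3_moment q x (4 * \<alpha> + 7) 1 0"
    using W_SU3_4a_1[of "\<alpha> + 1"] by (simp add: algebra_simps)
  also have "su3_moment q x (4 * \<alpha> + 7) 1 0 = q powi (3 * \<alpha> + 3) * su3_moment q x 2 0 (4 * \<alpha> + 3)"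
    using su3_moment_lattice[of "- (\<alpha> + 1)" 0 "\<alpha> + 1" "4 * \<alpha> + 7" 1 0 "- 1"]
    by (simp add: algebra_simps power2_eq_square)
  also have "su3_moment q x 2 0 (4 * \<alpha> + 3) = - su3_moment q x 2 (4 * \<alpha> + 3) 0"
    by (rule su3_moment_swap_right)
  finally show ?thesis
    unfolding W_SU3_4a_2 by simp
qed

lemma W_SU3_4a_3_plus_3:
  "W_SU3 (4 * \<alpha> + 6) x q = - (q powi (3 * \<alpha> + 3)) * W_SU3 (4 * \<alpha> + 3) x q"
proof -
  have "W_SU3 (4 * \<alpha> + 6) x q = (qpoch q q)\<^sup>2 * su3_moment q x 2 (4 * \<alpha> + 7) 0"
    using W_SU3_4a_2[of "\<alpha> + 1"] by (simp add: algebra_simps)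
  also have "su3_moment q x 2 (4 * \<alpha> + 7) 0 = q powi (3 * \<alpha> + 3) * su3_moment q x 1 2 (4 * \<alpha> + 3)"
    using su3_moment_lattice[of 0 "- (\<alpha> + 1)" "\<alpha> + 1" 2 "4 * \<alpha> + 7" 0 "- 1"]
    by (simp add: algebra_simps power2_eq_square)
  also have "su3_moment q x 1 2 (4 * \<alpha> + 3) = - su3_moment q x 2 1 (4 * \<alpha> + 3)"
    by (rule su3_moment_swap)
  finally show ?thesis
    unfolding W_SU3_4a_3 by simp
qed

end

end

theorem corollary3p12:
  fixes x q :: complex and \<alpha> m :: int
  assumes "norm q < 1" and "q \<noteq> 0" and "x \<noteq> 0"
  shows "(m = 4 * \<alpha> \<longrightarrow>
            W_SU3 (m + 3) x q =
              q powi (m div 4) / (1 + q powi (m div 4) + q powi (- (m div 4))) * W_SU3 m x q)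
       \<and> (m = 4 * \<alpha> + 1 \<longrightarrow>
            W_SU3 (m + 3) x q =
              (1 + q powi ((m + 3) div 4) + q powi ((2 * m + 6) div 4)) * W_SU3 m x q)
       \<and> (m = 4 * \<alpha> + 2 \<longrightarrow>
            W_SU3 (m + 3) x q = - (q powi ((3 * m + 6) div 4)) * W_SU3 m x q)
       \<and> (m = 4 * \<alpha> + 3 \<longrightarrow>
            W_SU3 (m + 3) x q = - (q powi ((3 * m + 3) div 4)) * W_SU3 m x q)"
proof (intro conjI impI)
  assume "m = 4 * \<alpha>"
  then show "W_SU3 (m + 3) x q = q powi (m div 4) / (1 + q powi (m div 4) + q powi (- (m div 4))) * W_SU3 m x q"
    using W_SU3_4a_plus_3[OF assms] by simp
next
  assume "m = 4 * \<alpha> + 1"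
  moreover have "(4 * \<alpha> + 1 + 3) div 4 = \<alpha> + 1" "(2 * (4 * \<alpha> + 1) + 6) div 4 = 2 * \<alpha> + 2"
    by simp_all
  ultimately show "W_SU3 (m + 3) x q = (1 + q powi ((m + 3) div 4) + q powi ((2 * m + 6) div 4)) * W_SU3 m x q"
    using W_SU3_4a_1_plus_3[OF assms] by (simp add: add.assoc)
next
  assume "m = 4 * \<alpha> + 2"
  moreover have "(3 * (4 * \<alpha> + 2) + 6) div 4 = 3 * \<alpha> + 3"
    by simp
  ultimately show "W_SU3 (m + 3) x q = - (q powi ((3 * m + 6) div 4)) * W_SU3 m x q"
    using W_SU3_4a_2_plus_3[OF assms] by (simp add: add.assoc)
next
  assume "m = 4 * \<alpha> + 3"
  moreover have "(3 * (4 * \<alpha> + 3) + 3) div 4 = 3 * \<alpha> + 3"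
    by simp
  ultimately show "W_SU3 (m + 3) x q = - (q powi ((3 * m + 3) div 4)) * W_SU3 m x q"
    using W_SU3_4a_3_plus_3[OF assms] by (simp add: add.assoc)
qed

end
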